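(* For $|q|<1$ and nonzero $z$ with $zq^n\neq1\neq z^{-1}q^n$ for $n\ge1$, \[ \frac{1}{(q;q)_\infty}\left(1+\sum_{n=1}^\infty\frac{(1-z)(1-z^{-1})(-1)^nq^{n(3n-1)/2}(1+q^{3n})}{(1-zq^n)(1-z^{-1}q^n)}\right)=(z+z^{-1}-1)R(z,q)+(1-z)(1-z^{-1}), \] where \[ R(z,q)=\frac{1}{(q;q)_\infty}\left(1+\sum_{n=1}^\infty\frac{(1-z)(1-z^{-1})(-1)^nq^{n(3n+1)/2}(1+q^n)}{(1-zq^n)(1-z^{-1}q^n)}\right). \]
   Context: Notation: $(q;q)_\infty=\prod_{j\ge1}(1-q^j)$. *)

theory Defs
  imports "HOL-Analysis.Analysis"
begin

definition qpoch_inf :: "complex \<Rightarrow> complex" where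
  "qpoch_inf q = (\<Prod>j. 1 - q ^ (j + 1))"

text \<open>R(z,q) as in the paper; the exponent n(3n+1)/2 is a natural number.\<close>
definition R :: "complex \<Rightarrow> complex \<Rightarrow> complex" where
  "R z q = (1 + (\<Sum>n. (\<lambda>m. (1 - z) * (1 - inverse z) * (-1) ^ m
        * q ^ ((m * (3 * m + 1)) div 2) * (1 + q ^ m)
        / ((1 - z * q ^ m) * (1 - inverse z * q ^ m))) (n + 1))) / qpoch_inf q"

end

theory Submission
  imports Defs
begin

text \<open>
  Since \<open>z * z^-1 = 1\<close>, the summand of index \<open>n\<close> on the left splits as \<open>z + z^-1 - 1\<close>
  times the summand of \<open>R(z,q)\<close> plus \<open>(1 - z)(1 - z^-1)\<close> times the pentagonal pair
  \<open>(-1)^n q^(n(3n-1)/2) (1 + q^n)\<close>. By Euler's pentagonal number theorem these pairs sum to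
  \<open>(q;q)_\<infinity> - 1\<close>, which yields the constant term after division by \<open>(q;q)_\<infinity>\<close>.
  Euler's theorem follows from Shanks' finite identity
  \<open>\<Sum>j\<le>N. (-1)^j (q^(j+1);q)_(N-j) q^(Nj + j(j+1)/2) = \<Sum>|n|\<le>N. (-1)^n q^(n(3n-1)/2)\<close>,
  proved by telescoping in \<open>N\<close>, on letting \<open>N \<rightarrow> \<infinity>\<close>: the term \<open>j = 0\<close> tends to
  \<open>(q;q)_\<infinity>\<close> and the remaining ones are \<open>O(|q|^N)\<close>.
\<close>

definition qpoch_segment :: "complex \<Rightarrow> nat \<Rightarrow> nat \<Rightarrow> complex" where
  "qpoch_segment q j n = (\<Prod>i\<in>{j<..n}. 1 - q ^ i)"

lemma qpoch_segment_same [simp]: "qpoch_segment q n n = 1"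
  unfolding qpoch_segment_def by simp

lemma qpoch_segment_Suc_right:
  "j \<le> n \<Longrightarrow> qpoch_segment q j (Suc n) = qpoch_segment q j n * (1 - q ^ Suc n)"
proof -
  assume "j \<le> n"
  hence "{j<..Suc n} = insert (Suc n) {j<..n}" by auto
  thus ?thesis unfolding qpoch_segment_def by (simp add: mult.commute)
qed

lemma qpoch_segment_Suc_left:
  "j < n \<Longrightarrow> qpoch_segment q j n = (1 - q ^ Suc j) * qpoch_segment q (Suc j) n"
proof -
  assume "j < n"
  hence "{j<..n} = insert (Suc j) {Suc j<..n}" by auto
  thus ?thesis unfolding qpoch_segment_def by simp
qed

lemma qpoch_segment_0: "qpoch_segment q 0 n = (\<Prod>i<n. 1 - q ^ (i + 1))"
  by (induction n) (simp_all add: qpoch_segment_Suc_right)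

lemma norm_qpoch_segment_le:
  assumes "norm q < 1"
  shows "norm (qpoch_segment q j n) \<le> exp (1 / (1 - norm q))"
proof -
  let ?r = "norm q"
  have "norm (qpoch_segment q j n) \<le> (\<Prod>i\<in>{j<..n}. norm (1 - q ^ i))"
    unfolding qpoch_segment_def by (rule norm_prod_le)
  also have "\<dots> \<le> (\<Prod>i\<in>{j<..n}. exp (?r ^ i))"
  proof (rule prod_mono)
    fix i
    have "norm (1 - q ^ i) \<le> 1 + ?r ^ i"
      by (metis norm_one norm_power norm_triangle_ineq4)
    also have "\<dots> \<le> exp (?r ^ i)" by (rule exp_ge_add_one_self)
    finally show "0 \<le> norm (1 - q ^ i) \<and> norm (1 - q ^ i) \<le> exp (?r ^ i)" by simp
  qed
  also have "\<dots> = exp (\<Sum>i\<in>{j<..n}. ?r ^ i)" by (simp add: exp_sum)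
  also have "(\<Sum>i\<in>{j<..n}. ?r ^ i) \<le> (\<Sum>i. ?r ^ i)"
    by (rule sum_le_suminf) (use assms in auto)
  also have "(\<Sum>i. ?r ^ i) = 1 / (1 - ?r)" using assms by (simp add: suminf_geometric)
  finally show ?thesis by simp
qed

lemma convergent_prod_qpoch:
  fixes q :: complex
  assumes "norm q < 1"
  shows "convergent_prod (\<lambda>j. 1 - q ^ (j + 1))"
proof (rule abs_convergent_prod_imp_convergent_prod, rule summable_imp_abs_convergent_prod)
  have "summable (\<lambda>i. norm q * norm q ^ i)"
    using assms by (intro summable_mult summable_geometric) simp
  thus "summable (\<lambda>i. norm (1 - q ^ (i + 1) - 1))" by (simp add: norm_power norm_mult)
qed

lemma qpoch_segment_0_tendsto:
  "norm q < 1 \<Longrightarrow> (\<lambda>n. qpoch_segment q 0 n) \<longlonglongrightarrow> qpoch_inf q"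
proof -
  assume "norm q < 1"
  hence "(\<lambda>n. \<Prod>i\<le>n. 1 - q ^ (i + 1)) \<longlonglongrightarrow> qpoch_inf q"
    unfolding qpoch_inf_def by (rule convergent_prod_LIMSEQ[OF convergent_prod_qpoch])
  hence "(\<lambda>n. qpoch_segment q 0 (Suc n)) \<longlonglongrightarrow> qpoch_inf q"
    by (simp add: qpoch_segment_0 lessThan_Suc_atMost)
  thus ?thesis by (rule LIMSEQ_imp_Suc)
qed

lemma qpoch_inf_nonzero: "norm q < 1 \<Longrightarrow> qpoch_inf q \<noteq> 0"
  unfolding qpoch_inf_def
proof (rule prodinf_nonzero[OF convergent_prod_qpoch])
  fix i :: nat
  assume "norm q < 1"
  hence "norm (q ^ (i + 1)) < 1"
    using power_strict_mono[of "norm q" 1 "i + 1"] by (simp add: norm_power del: power_Suc)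
  thus "1 - q ^ (i + 1) \<noteq> 0" by auto
qed

definition triangular :: "nat \<Rightarrow> nat" where
  "triangular j = j * (j + 1) div 2"

lemma triangular_Suc: "triangular (Suc j) = triangular j + Suc j"
proof -
  have "Suc j * (Suc j + 1) = j * (j + 1) + 2 * Suc j" by (simp add: algebra_simps)
  thus ?thesis unfolding triangular_def by simp
qed

lemma pentagonal_exponent_Suc:
  "(Suc n * (3 * Suc n - 1)) div 2 = n * Suc n + triangular (Suc n)"
proof -
  have "Suc n * (3 * Suc n - 1) = Suc n * (Suc n + 1) + 2 * (n * Suc n)"
    by (simp add: algebra_simps)
  thus ?thesis unfolding triangular_def by simp
qed

definition shanks_term :: "complex \<Rightarrow> nat \<Rightarrow> nat \<Rightarrow> complex" where
  "shanks_term q N j = (-1) ^ j * qpoch_segment q j N * q ^ (N * j + triangular j)"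

definition shanks_sum :: "complex \<Rightarrow> nat \<Rightarrow> complex" where
  "shanks_sum q N = (\<Sum>j\<le>N. shanks_term q N j)"

text \<open>The terms of index \<open>m\<close> and \<open>-m\<close> of Euler's series \<open>\<Sum>n\<in>\<int>. (-1)^n q^(n(3n-1)/2)\<close>.\<close>
definition pentagonal_term :: "complex \<Rightarrow> nat \<Rightarrow> complex" where
  "pentagonal_term q m = (-1) ^ m * q ^ ((m * (3 * m - 1)) div 2) * (1 + q ^ m)"

text \<open>Passing from \<open>N = n\<close> to \<open>N = n + 1\<close> changes the term of index \<open>j\<close> by a difference
  of consecutive values of this function of \<open>j\<close>, so the change of the sum telescopes.\<close>
definition shanks_correction :: "complex \<Rightarrow> nat \<Rightarrow> nat \<Rightarrow> complex" where
  "shanks_correction q n j =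
     (if j = 0 then 0 else (-1) ^ j * qpoch_segment q (j - 1) n * q ^ (n * j + triangular j))"

lemma shanks_term_Suc_diff:
  assumes "j \<le> n"
  shows "shanks_term q (Suc n) j - shanks_term q n j
       = shanks_correction q n (Suc j) - shanks_correction q n j"
proof -
  define A where "A = (-1) ^ j * qpoch_segment q j n * q ^ (n * j + triangular j)"
  have new: "shanks_term q (Suc n) j = A * (1 - q ^ Suc n) * q ^ j"
    using assms unfolding shanks_term_def A_def
    by (simp add: qpoch_segment_Suc_right power_add algebra_simps)
  have old: "shanks_term q n j = A" unfolding shanks_term_def A_def by simp
  have next_corr: "shanks_correction q n (Suc j) = - A * q ^ (n + j + 1)"
    unfolding shanks_correction_def A_def
    by (simp add: triangular_Suc power_add algebra_simps)
  have corr: "shanks_correction q n j = A * (1 - q ^ j)"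
  proof (cases j)
    case (Suc k)
    with assms have "k < n" by simp
    thus ?thesis unfolding shanks_correction_def A_def using Suc
      by (simp add: qpoch_segment_Suc_left algebra_simps)
  qed (simp add: shanks_correction_def)
  show ?thesis unfolding new old next_corr corr by (simp add: algebra_simps power_add)
qed

lemma shanks_correction_diagonal:
  "shanks_correction q n (Suc n) + shanks_term q (Suc n) (Suc n) = pentagonal_term q (Suc n)"
  unfolding shanks_correction_def shanks_term_def pentagonal_term_def pentagonal_exponent_Suc
  by (simp add: power_add algebra_simps)

lemma shanks_sum_Suc: "shanks_sum q (Suc n) = shanks_sum q n + pentagonal_term q (Suc n)"
proof -
  have "(\<Sum>j<Suc n. shanks_term q (Suc n) j) - (\<Sum>j<Suc n. shanks_term q n j)
      = (\<Sum>j<Suc n. shanks_correction q n (Suc j) - shanks_correction q n j)"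
    by (subst sum_subtractf[symmetric], rule sum.cong, auto simp: shanks_term_Suc_diff)
  also have "\<dots> = shanks_correction q n (Suc n) - shanks_correction q n 0"
    by (rule sum_lessThan_telescope)
  finally show ?thesis
    unfolding shanks_sum_def lessThan_Suc_atMost[symmetric] shanks_correction_diagonal[symmetric]
    by (simp add: shanks_correction_def algebra_simps)
qed

theorem shanks_identity: "shanks_sum q N = 1 + (\<Sum>n<N. pentagonal_term q (Suc n))"
proof (induction N)
  case 0
  show ?case by (simp add: shanks_sum_def shanks_term_def triangular_def)
next
  case (Suc N)
  thus ?case by (simp add: shanks_sum_Suc)
qed

lemma norm_shanks_tail_le:
  assumes "norm q < 1"
  shows "norm (\<Sum>j<N. shanks_term q N (Suc j))
       \<le> exp (1 / (1 - norm q)) / (1 - norm q) * norm q ^ N"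
proof -
  let ?r = "norm q" and ?M = "exp (1 / (1 - norm q))"
  have r: "0 \<le> ?r" "?r \<le> 1" using assms by auto
  have "norm (\<Sum>j<N. shanks_term q N (Suc j)) \<le> (\<Sum>j<N. norm (shanks_term q N (Suc j)))"
    by (rule norm_sum)
  also have "\<dots> \<le> (\<Sum>j<N. ?M * ?r ^ (N + j))"
  proof (rule sum_mono)
    fix j assume "j \<in> {..<N}"
    hence "j \<le> N * j" by simp
    hence "N + j \<le> N * Suc j + triangular (Suc j)" unfolding mult_Suc_right by linarith
    hence "?r ^ (N * Suc j + triangular (Suc j)) \<le> ?r ^ (N + j)"
      using r by (rule power_decreasing)
    with norm_qpoch_segment_le[OF assms, of "Suc j" N] r
    show "norm (shanks_term q N (Suc j)) \<le> ?M * ?r ^ (N + j)"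
      by (auto simp: shanks_term_def norm_mult norm_power intro: mult_mono)
  qed
  also have "\<dots> = ?M * ?r ^ N * (\<Sum>j<N. ?r ^ j)"
    by (simp add: sum_distrib_left power_add mult.assoc)
  also have "(\<Sum>j<N. ?r ^ j) \<le> (\<Sum>j. ?r ^ j)"
    by (rule sum_le_suminf) (use assms in auto)
  also have "(\<Sum>j. ?r ^ j) = 1 / (1 - ?r)" using assms by (simp add: suminf_geometric)
  finally show ?thesis by (simp add: mult_left_mono)
qed

lemma shanks_tail_tendsto_0:
  assumes "norm q < 1"
  shows "(\<lambda>N. \<Sum>j<N. shanks_term q N (Suc j)) \<longlonglongrightarrow> 0"
proof (rule Lim_null_comparison[OF always_eventually[OF allI[OF norm_shanks_tail_le[OF assms]]]])
  show "(\<lambda>N. exp (1 / (1 - norm q)) / (1 - norm q) * norm q ^ N) \<longlonglongrightarrow> 0"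
    using assms by (intro tendsto_mult_right_zero LIMSEQ_power_zero) simp
qed

lemma shanks_sum_tendsto:
  assumes "norm q < 1"
  shows "shanks_sum q \<longlonglongrightarrow> qpoch_inf q"
proof -
  have "shanks_sum q = (\<lambda>N. qpoch_segment q 0 N + (\<Sum>j<N. shanks_term q N (Suc j)))"
    unfolding shanks_sum_def by (simp add: fun_eq_iff sum.atMost_shift shanks_term_def triangular_def)
  moreover have "(\<lambda>N. qpoch_segment q 0 N + (\<Sum>j<N. shanks_term q N (Suc j))) \<longlonglongrightarrow> qpoch_inf q + 0"
    using assms by (intro tendsto_add qpoch_segment_0_tendsto shanks_tail_tendsto_0)
  ultimately show ?thesis by simp
qed

theorem euler_pentagonal_sums:
  assumes "norm q < 1"
  shows "(\<lambda>n. pentagonal_term q (Suc n)) sums (qpoch_inf q - 1)"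
proof -
  have "(\<lambda>N. shanks_sum q N - 1) \<longlonglongrightarrow> qpoch_inf q - 1"
    using shanks_sum_tendsto[OF assms] by (rule tendsto_diff) simp
  thus ?thesis unfolding sums_def shanks_identity by simp
qed

definition R_term :: "complex \<Rightarrow> complex \<Rightarrow> nat \<Rightarrow> complex" where
  "R_term z q m = (1 - z) * (1 - inverse z) * (-1) ^ m
     * q ^ ((m * (3 * m + 1)) div 2) * (1 + q ^ m)
     / ((1 - z * q ^ m) * (1 - inverse z * q ^ m))"

definition L_term :: "complex \<Rightarrow> complex \<Rightarrow> nat \<Rightarrow> complex" where
  "L_term z q m = (1 - z) * (1 - inverse z) * (-1) ^ m
     * q ^ ((m * (3 * m - 1)) div 2) * (1 + q ^ (3 * m))
     / ((1 - z * q ^ m) * (1 - inverse z * q ^ m))"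

lemma R_eq_R_term_series: "R z q = (1 + (\<Sum>n. R_term z q (n + 1))) / qpoch_inf q"
  unfolding R_def R_term_def ..

lemma pentagonal_exponent_shift:
  "(m::nat) \<ge> 1 \<Longrightarrow> (m * (3 * m + 1)) div 2 = (m * (3 * m - 1)) div 2 + m"
proof -
  assume "m \<ge> 1"
  hence "m * (3 * m + 1) = m * (3 * m - 1) + 2 * m"
    by (cases m) (simp_all add: algebra_simps)
  thus ?thesis by simp
qed

text \<open>If \<open>z w = 1\<close> then \<open>(1 - z x)(1 - w x) = 1 - (z + w) x + x^2\<close>, and
  \<open>1 + x^3 = (1 + x)(1 - x + x^2) = (z + w - 1) x (1 + x) + (1 + x)(1 - z x)(1 - w x)\<close>.\<close>
lemma one_plus_cube_split:
  fixes z w x K :: complex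
  assumes zw: "z * w = 1" and nz: "(1 - z * x) * (1 - w * x) \<noteq> 0"
  shows "K * (1 + x ^ 3) / ((1 - z * x) * (1 - w * x))
       = (z + w - 1) * (K * x * (1 + x) / ((1 - z * x) * (1 - w * x))) + K * (1 + x)"
proof -
  have "K * (1 + x ^ 3)
      = (z + w - 1) * (K * x * (1 + x)) + K * (1 + x) * ((1 - z * x) * (1 - w * x))"
    using zw by algebra
  thus ?thesis using nz by (simp add: field_simps)
qed

lemma L_term_split:
  assumes "m \<ge> 1" "z \<noteq> 0" "z * q ^ m \<noteq> 1" "inverse z * q ^ m \<noteq> 1"
  shows "L_term z q m = (z + inverse z - 1) * R_term z q m
                      + (1 - z) * (1 - inverse z) * pentagonal_term q m"
proof -
  define K where "K = (1 - z) * (1 - inverse z) * (-1) ^ m * q ^ ((m * (3 * m - 1)) div 2)"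
  have nz: "(1 - z * q ^ m) * (1 - inverse z * q ^ m) \<noteq> 0" using assms(3,4) by simp
  have "L_term z q m = K * (1 + (q ^ m) ^ 3) / ((1 - z * q ^ m) * (1 - inverse z * q ^ m))"
    unfolding L_term_def K_def by (simp add: power_mult[symmetric] mult.commute)
  also have "\<dots> = (z + inverse z - 1)
        * (K * q ^ m * (1 + q ^ m) / ((1 - z * q ^ m) * (1 - inverse z * q ^ m)))
      + K * (1 + q ^ m)"
    using assms(2) nz by (intro one_plus_cube_split) simp_all
  also have "K * q ^ m * (1 + q ^ m) / ((1 - z * q ^ m) * (1 - inverse z * q ^ m)) = R_term z q m"
    unfolding R_term_def K_def pentagonal_exponent_shift[OF assms(1)] by (simp add: power_add)
  also have "K * (1 + q ^ m) = (1 - z) * (1 - inverse z) * pentagonal_term q m"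
    unfolding K_def pentagonal_term_def by (simp add: mult.assoc)
  finally show ?thesis .
qed

text \<open>No hypothesis on \<open>z\<close> is needed: the rational factor of the summand converges as
  \<open>q\<^sup>m \<rightarrow> 0\<close> (with the junk value \<open>x / 0 = 0\<close> at poles), hence is bounded.\<close>
lemma summable_R_term:
  assumes "norm q < 1"
  shows "summable (\<lambda>n. R_term z q (n + 1))"
proof -
  define a where "a m = (1 - z) * (1 - inverse z) / ((1 - z * q ^ m) * (1 - inverse z * q ^ m))"
    for m
  have "a \<longlonglongrightarrow> (1 - z) * (1 - inverse z) / ((1 - z * 0) * (1 - inverse z * 0))"
    unfolding a_def using assms by (intro tendsto_intros) auto
  hence "Bseq a" by (intro convergent_imp_Bseq) (auto simp: convergent_def)
  then obtain B where B: "B > 0" "\<And>m. norm (a m) \<le> B" by (auto simp: Bseq_def)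
  show ?thesis
  proof (rule summable_comparison_test')
    show "summable (\<lambda>n. 2 * B * norm q ^ (n + 1))"
      by (intro summable_mult summable_ignore_initial_segment summable_geometric) (use assms in auto)
  next
    fix n :: nat
    let ?m = "n + 1"
    have "norm (R_term z q ?m)
        = norm (a ?m) * (norm q ^ ((?m * (3 * ?m + 1)) div 2) * norm (1 + q ^ ?m))"
      unfolding R_term_def a_def by (simp add: norm_mult norm_power norm_divide)
    also have "\<dots> \<le> B * (norm q ^ ?m * 2)"
    proof (intro mult_mono B(2) mult_nonneg_nonneg)
      have "?m \<le> (?m * (3 * ?m + 1)) div 2" by (simp add: pentagonal_exponent_shift)
      thus "norm q ^ ((?m * (3 * ?m + 1)) div 2) \<le> norm q ^ ?m"
        by (rule power_decreasing) (use assms in auto)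
      have "norm (1 + q ^ ?m) \<le> 1 + norm q ^ ?m" by (metis norm_one norm_power norm_triangle_ineq)
      also have "norm q ^ ?m \<le> 1" using assms by (intro power_le_one) auto
      finally show "norm (1 + q ^ ?m) \<le> 2" by simp
    qed (use B in auto)
    finally show "norm (R_term z q (n + 1)) \<le> 2 * B * norm q ^ (n + 1)" by (simp add: mult_ac)
  qed
qed

theorem lemma4p1:
  fixes q z :: complex
  assumes "norm q < 1"
    and "z \<noteq> 0"
    and "\<And>n::nat. n \<ge> 1 \<Longrightarrow> z * q ^ n \<noteq> 1"
    and "\<And>n::nat. n \<ge> 1 \<Longrightarrow> inverse z * q ^ n \<noteq> 1"
  shows "(1 + (\<Sum>n. (\<lambda>m. (1 - z) * (1 - inverse z) * (-1) ^ m
        * q ^ ((m * (3 * m - 1)) div 2) * (1 + q ^ (3 * m))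
        / ((1 - z * q ^ m) * (1 - inverse z * q ^ m))) (n + 1))) / qpoch_inf q
    = (z + inverse z - 1) * R z q + (1 - z) * (1 - inverse z)"
proof -
  define k where "k = z + inverse z - 1"
  define c where "c = (1 - z) * (1 - inverse z)"
  define SR where "SR = (\<Sum>n. R_term z q (n + 1))"
  have split: "L_term z q (n + 1) = k * R_term z q (n + 1) + c * pentagonal_term q (Suc n)" for n
    unfolding k_def c_def using assms(2) assms(3,4)[of "n + 1"] by (subst L_term_split) simp_all
  have "(\<lambda>n. L_term z q (n + 1)) sums (k * SR + c * (qpoch_inf q - 1))"
    unfolding split SR_def using assms(1)
    by (intro sums_add sums_mult summable_sums summable_R_term euler_pentagonal_sums)
  hence L_sum: "(\<Sum>n. L_term z q (n + 1)) = k * SR + c * (qpoch_inf q - 1)"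
    by (simp add: sums_iff)
  have "c = 1 - k" unfolding c_def k_def using assms(2) by (simp add: field_simps)
  hence "(1 + (\<Sum>n. L_term z q (n + 1))) / qpoch_inf q = k * ((1 + SR) / qpoch_inf q) + c"
    unfolding L_sum using qpoch_inf_nonzero[OF assms(1)] by (simp add: field_simps)
  thus ?thesis unfolding L_term_def k_def c_def SR_def R_eq_R_term_series .
qed

end
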